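(* Let $x\in S\cap\mathbb{R}^n$ and $J\subset[n]$. Then $J$ is a feasible descent direction at $x$ (i.e. $x+\delta\chi_J\in S$ and $f(x+\delta\chi_J)<f(x)$ for all $0<\delta<\epsilon(x)$) if and only if: (1) for any $j\in J$ and any $w_i\in\mathcal{N}^-_W(j,x)$ there exists $j'\in\mathcal{N}^-_V(w_i,x)$ with $j'\in J$; and (2) $\mu(J,x)<0$.
   Context: $\mathbb{R}_{\max}=\mathbb{R}\cup\{-\infty\}$, $\chi_J$ the indicator vector of $J$. Data: $A^\pm=(a^\pm_{i,j})\in\mathbb{R}_{\max}^{m\times n}$, $C=(c_{k,j})\in\mathbb{R}_{\max}^{p\times n}$, $\mu^+\in\mathbb{Z}_{\ge0}^p$, $\mu^-\in\mathbb{Z}_{\ge0}^n$; $A=(a_{i,j})$, $a_{i,j}=\max(a^+_{i,j},a^-_{i,j})$. $f(x)=\sum_k\mu^+_k\max_j(c_{k,j}+x_j)-\sum_j\mu^-_jx_j$; $S=\{x:\max_j(a^+_{i,j}+x_j)\ge\max_j(a^-_{i,j}+x_j)\ \forall i\in[m]\}$. Standing assumptions: each row of $A$ and $C$ has a finite entry; $\sum_k\mu^+_k=\sum_j\mu^-_j$; the undirected graph on $\{u_k\}\cup[n]\cup\{w_i\}$ with edges $\{u_k,j\}$ ($c_{k,j}\ne-\infty$), $\{w_i,j\}$ ($a_{i,j}\ne-\infty$) is connected. $\epsilon(x)$ is the smallest positive value among $|(a_{i,j_1}+x_{j_1})-(a_{i,j_2}+x_{j_2})|$ and $|(c_{k,j_1}+x_{j_1})-(c_{k,j_2}+x_{j_2})|$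 over all $i,k,j_1,j_2$. Tangent digraph $\mathcal{G}(x)$ on $U=\{u_1..u_p\}$, $V=[n]$, $W=\{w_1..w_m\}$ with edges $E_1(x)=\{(u_k,j):\max_{j'}(c_{k,j'}+x_{j'})=c_{k,j}+x_j\}$, $E_2(x)=\{(w_i,j):\max_{j'}(a_{i,j'}+x_{j'})=a^-_{i,j}+x_j\}$, $E_3(x)=\{(j,w_i):\max_{j'}(a_{i,j'}+x_{j'})=a^+_{i,j}+x_j\}$. $\mathcal{N}_U(J,x)=\{u_k:(u_k,j)\in E_1(x)\text{ for some }j\in J\}$, $\mathcal{N}^-_W(j,x)=\{w_i:(w_i,j)\in E_2(x)\}$, $\mathcal{N}^-_V(w_i,x)=\{j:(j,w_i)\in E_3(x)\}$, and $\mu(J,x)=\sum_{u_k\in\mathcal{N}_U(J,x)}\mu^+_k-\sum_{j\in J}\mu^-_j$. *)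

theory Defs
  imports "HOL-Library.Extended_Real"
begin

(* Indices are 0-based: [n] is rendered as {..<n}, [m] as {..<m}, [p] as {..<p}.
   Matrices over R_max are functions nat => nat => ereal whose entries are never +infinity.
   Points x in R^n are functions nat => real; only the values x j for j < n matter. *)

definition Amax :: "(nat \<Rightarrow> nat \<Rightarrow> ereal) \<Rightarrow> (nat \<Rightarrow> nat \<Rightarrow> ereal) \<Rightarrow> nat \<Rightarrow> nat \<Rightarrow> ereal" where
  "Amax Ap Am i j = max (Ap i j) (Am i j)"

definition rowmax :: "nat \<Rightarrow> (nat \<Rightarrow> nat \<Rightarrow> ereal) \<Rightarrow> (nat \<Rightarrow> real) \<Rightarrow> nat \<Rightarrow> ereal" where
  "rowmax n M x i = Max ((\<lambda>j. M i j + ereal (x j)) ` {..<n})"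

definition objf :: "nat \<Rightarrow> nat \<Rightarrow> (nat \<Rightarrow> nat \<Rightarrow> ereal) \<Rightarrow> (nat \<Rightarrow> nat) \<Rightarrow> (nat \<Rightarrow> nat)
    \<Rightarrow> (nat \<Rightarrow> real) \<Rightarrow> ereal" where
  "objf n p C mup mum x =
     (\<Sum>k<p. ereal (real (mup k)) * rowmax n C x k) - ereal (\<Sum>j<n. real (mum j) * x j)"

definition feasS :: "nat \<Rightarrow> nat \<Rightarrow> (nat \<Rightarrow> nat \<Rightarrow> ereal) \<Rightarrow> (nat \<Rightarrow> nat \<Rightarrow> ereal) \<Rightarrow> (nat \<Rightarrow> real) set" where
  "feasS n m Ap Am = {x. \<forall>i<m. rowmax n Ap x i \<ge> rowmax n Am x i}"

definition indic_add :: "(nat \<Rightarrow> real) \<Rightarrow> real \<Rightarrow> nat set \<Rightarrow> nat \<Rightarrow> real" where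
  "indic_add x \<delta> J = (\<lambda>j. x j + (if j \<in> J then \<delta> else 0))"

(* epsilon(x): smallest positive value among the (finite) differences;
   +infinity if there is no such value *)
definition eps :: "nat \<Rightarrow> nat \<Rightarrow> nat \<Rightarrow> (nat \<Rightarrow> nat \<Rightarrow> ereal) \<Rightarrow> (nat \<Rightarrow> nat \<Rightarrow> ereal) \<Rightarrow> (nat \<Rightarrow> nat \<Rightarrow> ereal)
    \<Rightarrow> (nat \<Rightarrow> real) \<Rightarrow> ereal" where
  "eps n m p Ap Am C x = Inf (ereal ` {d. d > 0 \<and>
      ((\<exists>i<m. \<exists>j1<n. \<exists>j2<n. \<exists>a1 a2. Amax Ap Am i j1 = ereal a1 \<and> Amax Ap Am i j2 = ereal a2 \<and>
           d = \<bar>(a1 + x j1) - (a2 + x j2)\<bar>) \<or>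
       (\<exists>k<p. \<exists>j1<n. \<exists>j2<n. \<exists>c1 c2. C k j1 = ereal c1 \<and> C k j2 = ereal c2 \<and>
           d = \<bar>(c1 + x j1) - (c2 + x j2)\<bar>))})"

definition E1 :: "nat \<Rightarrow> (nat \<Rightarrow> nat \<Rightarrow> ereal) \<Rightarrow> (nat \<Rightarrow> real) \<Rightarrow> nat \<Rightarrow> nat \<Rightarrow> bool" where
  "E1 n C x k j \<longleftrightarrow> rowmax n C x k = C k j + ereal (x j)"

definition E2 :: "nat \<Rightarrow> (nat \<Rightarrow> nat \<Rightarrow> ereal) \<Rightarrow> (nat \<Rightarrow> nat \<Rightarrow> ereal) \<Rightarrow> (nat \<Rightarrow> real) \<Rightarrow> nat \<Rightarrow> nat \<Rightarrow> bool" where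
  "E2 n Ap Am x i j \<longleftrightarrow> rowmax n (Amax Ap Am) x i = Am i j + ereal (x j)"

(* E3 n Ap Am x j i means the edge (j, w_i) *)
definition E3 :: "nat \<Rightarrow> (nat \<Rightarrow> nat \<Rightarrow> ereal) \<Rightarrow> (nat \<Rightarrow> nat \<Rightarrow> ereal) \<Rightarrow> (nat \<Rightarrow> real) \<Rightarrow> nat \<Rightarrow> nat \<Rightarrow> bool" where
  "E3 n Ap Am x j i \<longleftrightarrow> rowmax n (Amax Ap Am) x i = Ap i j + ereal (x j)"

definition NU :: "nat \<Rightarrow> nat \<Rightarrow> (nat \<Rightarrow> nat \<Rightarrow> ereal) \<Rightarrow> nat set \<Rightarrow> (nat \<Rightarrow> real) \<Rightarrow> nat set" where
  "NU n p C J x = {k. k < p \<and> (\<exists>j\<in>J. E1 n C x k j)}"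

definition NW_in :: "nat \<Rightarrow> nat \<Rightarrow> (nat \<Rightarrow> nat \<Rightarrow> ereal) \<Rightarrow> (nat \<Rightarrow> nat \<Rightarrow> ereal) \<Rightarrow> nat \<Rightarrow> (nat \<Rightarrow> real) \<Rightarrow> nat set" where
  "NW_in n m Ap Am j x = {i. i < m \<and> E2 n Ap Am x i j}"

definition NV_in :: "nat \<Rightarrow> (nat \<Rightarrow> nat \<Rightarrow> ereal) \<Rightarrow> (nat \<Rightarrow> nat \<Rightarrow> ereal) \<Rightarrow> nat \<Rightarrow> (nat \<Rightarrow> real) \<Rightarrow> nat set" where
  "NV_in n Ap Am i x = {j. j < n \<and> E3 n Ap Am x j i}"

definition muJ :: "nat \<Rightarrow> nat \<Rightarrow> (nat \<Rightarrow> nat \<Rightarrow> ereal) \<Rightarrow> (nat \<Rightarrow> nat) \<Rightarrow> (nat \<Rightarrow> nat)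
    \<Rightarrow> nat set \<Rightarrow> (nat \<Rightarrow> real) \<Rightarrow> int" where
  "muJ n p C mup mum J x = (\<Sum>k\<in>NU n p C J x. int (mup k)) - (\<Sum>j\<in>J. int (mum j))"

datatype gvert = Uv nat | Vv nat | Wv nat

definition gverts :: "nat \<Rightarrow> nat \<Rightarrow> nat \<Rightarrow> gvert set" where
  "gverts n m p = Uv ` {..<p} \<union> Vv ` {..<n} \<union> Wv ` {..<m}"

definition gedges :: "nat \<Rightarrow> nat \<Rightarrow> nat \<Rightarrow> (nat \<Rightarrow> nat \<Rightarrow> ereal) \<Rightarrow> (nat \<Rightarrow> nat \<Rightarrow> ereal)
    \<Rightarrow> (gvert \<times> gvert) set" where
  "gedges n m p A C =
     {(Uv k, Vv j) | k j. k < p \<and> j < n \<and> C k j \<noteq> -\<infinity>} \<union>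
     {(Vv j, Uv k) | k j. k < p \<and> j < n \<and> C k j \<noteq> -\<infinity>} \<union>
     {(Wv i, Vv j) | i j. i < m \<and> j < n \<and> A i j \<noteq> -\<infinity>} \<union>
     {(Vv j, Wv i) | i j. i < m \<and> j < n \<and> A i j \<noteq> -\<infinity>}"

definition graph_connected :: "nat \<Rightarrow> nat \<Rightarrow> nat \<Rightarrow> (nat \<Rightarrow> nat \<Rightarrow> ereal) \<Rightarrow> (nat \<Rightarrow> nat \<Rightarrow> ereal) \<Rightarrow> bool" where
  "graph_connected n m p A C \<longleftrightarrow>
     (\<forall>u\<in>gverts n m p. \<forall>v\<in>gverts n m p. (u, v) \<in> (gedges n m p A C)\<^sup>*)"

end

theory Submission imports Defs begin

(* Since eps x is the smallest nonzero gap between the entries a_ij + x_j (resp. c_kj + x_j) of a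
   row, for 0 < delta < eps x no entry that is not maximal at x can overtake the row maximum when
   x moves to x + delta chi_J: the maximum of each row rises by exactly delta if it is attained in
   a column of J and stays put otherwise. For the objective this gives
   f (x + delta chi_J) = f x + delta mu(J, x). For the constraints, feasibility of x means that the
   maximum of row i of A is attained by A+; after the move the constraint holds iff, whenever the
   maximum rises, it is still attained by some a+_ij' with j' in J, which is condition (1). *)

lemma rowmax_ge: "j < n \<Longrightarrow> M i j + ereal (x j) \<le> rowmax n M x i"
  unfolding rowmax_def by (rule Max_ge) auto

lemma rowmax_attained: "0 < n \<Longrightarrow> \<exists>j<n. rowmax n M x i = M i j + ereal (x j)"
proof -
  assume "0 < n"
  then have "rowmax n M x i \<in> (\<lambda>j. M i j + ereal (x j)) ` {..<n}"
    unfolding rowmax_def by (intro Max_in) auto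
  then show ?thesis by auto
qed

lemma rowmax_ge_iff: "0 < n \<Longrightarrow> c \<le> rowmax n M x i \<longleftrightarrow> (\<exists>j<n. c \<le> M i j + ereal (x j))"
  unfolding rowmax_def by (subst Max_ge_iff) auto

lemma rowmax_le_iff: "0 < n \<Longrightarrow> rowmax n M x i \<le> c \<longleftrightarrow> (\<forall>j<n. M i j + ereal (x j) \<le> c)"
  unfolding rowmax_def by (subst Max_le_iff) auto

lemma rowmax_mono:
  assumes "\<forall>j<n. M i j + ereal (x j) \<le> M' i j + ereal (y j)"
  shows "rowmax n M x i \<le> rowmax n M' y i"
proof (cases "n = 0")
  case True
  then show ?thesis by (simp add: rowmax_def)
next
  case False
  then show ?thesis
    using assms rowmax_ge[where M = M' and x = y] by (auto simp: rowmax_le_iff intro: order_trans)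
qed

lemma Amax_add: "Amax Ap Am i j + ereal y = max (Ap i j + ereal y) (Am i j + ereal y)"
proof (cases "Ap i j \<le> Am i j")
  case True
  then show ?thesis by (simp add: Amax_def max_def add_right_mono)
next
  case False
  then have "Am i j + ereal y \<le> Ap i j + ereal y" by (simp add: add_right_mono)
  then show ?thesis using False by (simp add: Amax_def max_def)
qed

lemma rowmax_Amax: "rowmax n (Amax Ap Am) x i = max (rowmax n Ap x i) (rowmax n Am x i)"
proof (cases "n = 0")
  case True
  then show ?thesis by (simp add: rowmax_def)
next
  case False
  have "Amax Ap Am i j + ereal (x j) \<le> max (rowmax n Ap x i) (rowmax n Am x i)" if "j < n" for j
    unfolding Amax_add using that by (intro max.mono rowmax_ge)
  then have "rowmax n (Amax Ap Am) x i \<le> max (rowmax n Ap x i) (rowmax n Am x i)"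
    using False by (simp add: rowmax_le_iff)
  moreover have "rowmax n M x i \<le> rowmax n (Amax Ap Am) x i" if "M = Ap \<or> M = Am" for M
    using that by (intro rowmax_mono) (auto simp: Amax_add)
  ultimately show ?thesis by (simp add: antisym)
qed

lemma rowmax_real:
  assumes "\<forall>j<n. M i j \<noteq> \<infinity>" and "\<exists>j<n. M i j \<noteq> -\<infinity>"
  obtains R where "rowmax n M x i = ereal R"
proof -
  obtain j0 where j0: "j0 < n" "M i j0 \<noteq> -\<infinity>" using assms(2) by blast
  obtain j where j: "j < n" "rowmax n M x i = M i j + ereal (x j)"
    using rowmax_attained[of n M x i] j0(1) by auto
  have "M i j0 + ereal (x j0) \<le> M i j + ereal (x j)" using rowmax_ge[OF j0(1), of M i x] j(2) by simp
  then have "M i j \<noteq> -\<infinity>" using j0(2) by (cases "M i j0") auto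
  with assms(1) j show thesis by (cases "M i j") (auto intro: that)
qed

lemma rowmax_indic_add:
  assumes R: "rowmax n M x i = ereal R" and \<delta>: "0 < \<delta>"
    and gap: "\<forall>j<n. \<forall>a. M i j = ereal a \<longrightarrow> a + x j \<noteq> R \<longrightarrow> \<delta> < \<bar>a + x j - R\<bar>"
  shows "rowmax n M (indic_add x \<delta> J) i =
    (if \<exists>j\<in>J. j < n \<and> M i j + ereal (x j) = ereal R then ereal (R + \<delta>) else ereal R)"
    (is "_ = ?v")
proof (cases "n = 0")
  case True
  then show ?thesis using R by (simp add: rowmax_def)
next
  case False
  then have n: "0 < n" by simp
  let ?y = "indic_add x \<delta> J"
  have "M i j + ereal (?y j) \<le> ?v" if j: "j < n" for j
  proof (cases "M i j")
    case (real a)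
    have "a + x j \<le> R" using rowmax_ge[OF j, of M i x] R real by simp
    moreover have "a + x j \<noteq> R \<Longrightarrow> \<delta> < \<bar>a + x j - R\<bar>" using gap j real by blast
    ultimately show ?thesis using real j \<delta> by (auto simp: indic_add_def)
  next
    case PInf
    then show ?thesis using rowmax_ge[OF j, of M i x] R by simp
  qed simp
  then have le: "rowmax n M ?y i \<le> ?v" using n by (simp add: rowmax_le_iff)
  have "?v \<le> rowmax n M ?y i"
  proof (cases "\<exists>j\<in>J. j < n \<and> M i j + ereal (x j) = ereal R")
    case True
    then obtain j where j: "j \<in> J" "j < n" "M i j + ereal (x j) = ereal R" by blast
    then have "M i j + ereal (?y j) = ereal (R + \<delta>)" by (cases "M i j") (auto simp: indic_add_def)
    then show ?thesis using rowmax_ge[of j n M i ?y] j(2) True by simp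
  next
    case False
    obtain j where "j < n" "M i j + ereal (x j) = ereal R"
      using rowmax_attained[OF n, of M x i] R by auto
    then show ?thesis
      using rowmax_ge[of j n M i ?y] False by (auto simp: indic_add_def)
  qed
  with le show ?thesis by (rule antisym)
qed

lemma rowmax_indic_add_ge_iff:
  assumes R: "rowmax n M x i \<le> ereal R" and \<delta>: "0 < \<delta>"
  shows "ereal (R + \<delta>) \<le> rowmax n M (indic_add x \<delta> J) i \<longleftrightarrow>
    (\<exists>j\<in>J. j < n \<and> M i j + ereal (x j) = ereal R)"
proof
  assume top: "ereal (R + \<delta>) \<le> rowmax n M (indic_add x \<delta> J) i"
  have "0 < n"
  proof (rule ccontr)
    assume "\<not> 0 < n"
    then have "rowmax n M (indic_add x \<delta> J) i = rowmax n M x i" by (simp add: rowmax_def)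
    then have "ereal (R + \<delta>) \<le> ereal R" using top R by (metis order_trans)
    then show False using \<delta> by simp
  qed
  then obtain j where j: "j < n" "ereal (R + \<delta>) \<le> M i j + ereal (indic_add x \<delta> J j)"
    using top by (auto simp: rowmax_ge_iff)
  have "M i j + ereal (x j) \<le> ereal R" using rowmax_ge[OF j(1), of M i x] R by simp
  with j \<delta> show "\<exists>j\<in>J. j < n \<and> M i j + ereal (x j) = ereal R"
    by (cases "M i j") (auto simp: indic_add_def split: if_splits)
next
  assume "\<exists>j\<in>J. j < n \<and> M i j + ereal (x j) = ereal R"
  then obtain j where "j \<in> J" "j < n" "M i j + ereal (x j) = ereal R" by blast
  then show "ereal (R + \<delta>) \<le> rowmax n M (indic_add x \<delta> J) i"
    using rowmax_ge[of j n M i "indic_add x \<delta> J"] by (cases "M i j") (auto simp: indic_add_def add.assoc)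
qed

lemma finite_row_gaps:
  fixes M :: "nat \<Rightarrow> nat \<Rightarrow> ereal"
  shows "finite {d. \<exists>i<m. \<exists>j1<n. \<exists>j2<n. \<exists>a1 a2. M i j1 = ereal a1 \<and> M i j2 = ereal a2 \<and>
      d = \<bar>(a1 + x j1) - (a2 + x j2)\<bar>}" (is "finite ?G")
proof -
  have "?G \<subseteq> (\<lambda>(i, j1, j2). \<bar>(real_of_ereal (M i j1) + x j1) - (real_of_ereal (M i j2) + x j2)\<bar>)
      ` ({..<m} \<times> {..<n} \<times> {..<n})"
    by force
  then show ?thesis by (rule finite_subset) simp
qed

lemma Inf_ereal_finite_pos:
  assumes "finite D" and "\<forall>d\<in>D. 0 < d"
  shows "0 < Inf (ereal ` D)"
proof (cases "D = {}")
  case False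
  then have "Inf (ereal ` D) \<in> ereal ` D"
    using assms(1) cInf_eq_Min[of "ereal ` D"] Min_in[of "ereal ` D"] by simp
  then show ?thesis using assms(2) by auto
qed (simp add: top_ereal_def)

lemma eps_pos: "0 < eps n m p Ap Am C x"
  unfolding eps_def
  by (rule Inf_ereal_finite_pos, rule finite_subset[OF _ finite_UnI[OF
        finite_row_gaps[of m n "Amax Ap Am" x] finite_row_gaps[of p n C x]]]) auto

lemma eps_le_row_gap_Amax:
  assumes "i < m"
  shows "\<forall>j1<n. \<forall>j2<n. \<forall>a1 a2. Amax Ap Am i j1 = ereal a1 \<longrightarrow> Amax Ap Am i j2 = ereal a2 \<longrightarrow>
    a1 + x j1 \<noteq> a2 + x j2 \<longrightarrow> eps n m p Ap Am C x \<le> ereal \<bar>(a1 + x j1) - (a2 + x j2)\<bar>"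
  unfolding eps_def using assms by (force intro: Inf_lower)

lemma eps_le_row_gap_C:
  assumes "k < p"
  shows "\<forall>j1<n. \<forall>j2<n. \<forall>c1 c2. C k j1 = ereal c1 \<longrightarrow> C k j2 = ereal c2 \<longrightarrow>
    c1 + x j1 \<noteq> c2 + x j2 \<longrightarrow> eps n m p Ap Am C x \<le> ereal \<bar>(c1 + x j1) - (c2 + x j2)\<bar>"
  unfolding eps_def using assms by (force intro: Inf_lower)

lemma nonmax_entry_gap:
  assumes sep: "\<forall>j1<n. \<forall>j2<n. \<forall>a1 a2. M i j1 = ereal a1 \<longrightarrow> M i j2 = ereal a2 \<longrightarrow>
      a1 + x j1 \<noteq> a2 + x j2 \<longrightarrow> e \<le> ereal \<bar>(a1 + x j1) - (a2 + x j2)\<bar>"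
    and \<delta>: "ereal \<delta> < e" and R: "rowmax n M x i = ereal R"
  shows "\<forall>j<n. \<forall>a. M i j = ereal a \<longrightarrow> a + x j \<noteq> R \<longrightarrow> \<delta> < \<bar>a + x j - R\<bar>"
proof (intro allI impI)
  fix j a assume j: "j < n" "M i j = ereal a" "a + x j \<noteq> R"
  obtain j0 where j0: "j0 < n" "rowmax n M x i = M i j0 + ereal (x j0)"
    using rowmax_attained[of n M x i] j(1) by auto
  then have "M i j0 = ereal (R - x j0)" using R by (cases "M i j0") auto
  then have "e \<le> ereal \<bar>a + x j - R\<bar>" using sep j j0(1) by fastforce
  with \<delta> show "\<delta> < \<bar>a + x j - R\<bar>" using order_less_le_trans by fastforce
qed

lemma Amax_tight_iff:
  assumes R: "rowmax n (Amax Ap Am) x i = ereal R" and j: "j < n"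
  shows "Amax Ap Am i j + ereal (x j) = ereal R \<longleftrightarrow> E2 n Ap Am x i j \<or> E3 n Ap Am x j i"
proof -
  have "max (Ap i j + ereal (x j)) (Am i j + ereal (x j)) \<le> ereal R"
    using rowmax_ge[OF j, of "Amax Ap Am" i x] R by (simp add: Amax_add)
  then show ?thesis unfolding E2_def E3_def R Amax_add by (auto simp: max_def)
qed

lemma feasible_row_indic_add_iff:
  assumes fin: "\<forall>j<n. Ap i j \<noteq> \<infinity>" "\<forall>j<n. Am i j \<noteq> \<infinity>" "\<exists>j<n. Amax Ap Am i j \<noteq> -\<infinity>"
    and x_feas: "rowmax n Am x i \<le> rowmax n Ap x i"
    and i: "i < m" and J: "J \<subseteq> {..<n}"
    and \<delta>: "0 < \<delta>" "ereal \<delta> < eps n m p Ap Am C x"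
  shows "rowmax n Am (indic_add x \<delta> J) i \<le> rowmax n Ap (indic_add x \<delta> J) i \<longleftrightarrow>
    ((\<exists>j\<in>J. E2 n Ap Am x i j) \<longrightarrow> (\<exists>j\<in>J. E3 n Ap Am x j i))"
proof -
  let ?y = "indic_add x \<delta> J"
  have "\<forall>j<n. Amax Ap Am i j \<noteq> \<infinity>" using fin(1,2) by (simp add: Amax_def max_def)
  then obtain R where R: "rowmax n (Amax Ap Am) x i = ereal R" using fin(3) by (rule rowmax_real)
  then have RAp: "rowmax n Ap x i = ereal R" using x_feas by (simp add: rowmax_Amax max_absorb1)
  have feas_iff: "rowmax n Am ?y i \<le> rowmax n Ap ?y i \<longleftrightarrow> rowmax n (Amax Ap Am) ?y i \<le> rowmax n Ap ?y i"
    by (simp add: rowmax_Amax)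
  have shift: "rowmax n (Amax Ap Am) ?y i =
      (if \<exists>j\<in>J. j < n \<and> Amax Ap Am i j + ereal (x j) = ereal R then ereal (R + \<delta>) else ereal R)"
    using rowmax_indic_add[OF R \<delta>(1) nonmax_entry_gap[OF eps_le_row_gap_Amax[OF i] \<delta>(2) R]] .
  have Ap_raised: "ereal (R + \<delta>) \<le> rowmax n Ap ?y i \<longleftrightarrow> (\<exists>j\<in>J. E3 n Ap Am x j i)"
    using rowmax_indic_add_ge_iff[of n Ap x i R \<delta> J] RAp \<delta>(1) J R by (auto simp: E3_def) metis+
  have Ap_lower: "ereal R \<le> rowmax n Ap ?y i"
    using rowmax_mono[of n Ap i x Ap ?y] RAp \<delta>(1) by (simp add: indic_add_def add_left_mono)
  have tight: "Amax Ap Am i j + ereal (x j) = ereal R \<longleftrightarrow> E2 n Ap Am x i j \<or> E3 n Ap Am x j i"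
    if "j \<in> J" for j
    using Amax_tight_iff[OF R] that J by auto
  show ?thesis
    unfolding feas_iff shift using Ap_raised Ap_lower tight J by auto
qed

lemma feasS_indic_add_iff:
  assumes "\<forall>i<m. \<forall>j<n. Ap i j \<noteq> \<infinity>" "\<forall>i<m. \<forall>j<n. Am i j \<noteq> \<infinity>"
    and "\<forall>i<m. \<exists>j<n. Amax Ap Am i j \<noteq> -\<infinity>"
    and "x \<in> feasS n m Ap Am" and J: "J \<subseteq> {..<n}"
    and "0 < \<delta>" "ereal \<delta> < eps n m p Ap Am C x"
  shows "indic_add x \<delta> J \<in> feasS n m Ap Am \<longleftrightarrow>
    (\<forall>j\<in>J. \<forall>i\<in>NW_in n m Ap Am j x. \<exists>j'\<in>NV_in n Ap Am i x. j' \<in> J)"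
proof -
  have "indic_add x \<delta> J \<in> feasS n m Ap Am \<longleftrightarrow>
      (\<forall>i<m. (\<exists>j\<in>J. E2 n Ap Am x i j) \<longrightarrow> (\<exists>j\<in>J. E3 n Ap Am x j i))"
    using assms feasible_row_indic_add_iff[where J = J and \<delta> = \<delta> and p = p and C = C]
    by (simp add: feasS_def)
  then show ?thesis using J by (auto simp: NW_in_def NV_in_def) blast+
qed

lemma sum_mult_indicator:
  fixes f :: "'a \<Rightarrow> 'b::comm_semiring_1"
  assumes "finite A" and "B \<subseteq> A"
  shows "(\<Sum>k\<in>A. f k * (if k \<in> B then c else 0)) = c * sum f B"
proof -
  have "(\<Sum>k\<in>A. f k * (if k \<in> B then c else 0)) = (\<Sum>k\<in>A. if k \<in> B then c * f k else 0)"
    by (rule sum.cong) (auto simp: mult.commute)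
  also have "\<dots> = c * sum f B"
    using assms by (simp add: sum.inter_restrict[symmetric] Int_absorb1 sum_distrib_left)
  finally show ?thesis .
qed

lemma objf_indic_add:
  assumes C_fin: "\<forall>k<p. \<forall>j<n. C k j \<noteq> \<infinity>" "\<forall>k<p. \<exists>j<n. C k j \<noteq> -\<infinity>"
    and J: "J \<subseteq> {..<n}" and \<delta>: "0 < \<delta>" "ereal \<delta> < eps n m p Ap Am C x"
  shows "\<exists>F. objf n p C mup mum x = ereal F \<and>
    objf n p C mup mum (indic_add x \<delta> J) = ereal (F + \<delta> * of_int (muJ n p C mup mum J x))"
proof -
  define R where "R k = real_of_ereal (rowmax n C x k)" for k
  define N where "N = NU n p C J x"
  define F where "F = (\<Sum>k<p. mup k * R k) - (\<Sum>j<n. mum j * x j)"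
  have R: "rowmax n C x k = ereal (R k)" if "k < p" for k
    using rowmax_real[of n C k x] C_fin that unfolding R_def by force
  have shift: "rowmax n C (indic_add x \<delta> J) k = ereal (R k + (if k \<in> N then \<delta> else 0))" if k: "k < p" for k
  proof -
    have "(\<exists>j\<in>J. j < n \<and> C k j + ereal (x j) = ereal (R k)) \<longleftrightarrow> k \<in> N"
      using R[OF k] k J by (auto simp: N_def NU_def E1_def) metis+
    then show ?thesis
      using rowmax_indic_add[OF R[OF k] \<delta>(1) nonmax_entry_gap[OF eps_le_row_gap_C[OF k] \<delta>(2) R[OF k]]]
      by simp
  qed
  have "objf n p C mup mum (indic_add x \<delta> J) =
      ereal ((\<Sum>k<p. mup k * R k) + (\<Sum>k<p. mup k * (if k \<in> N then \<delta> else 0))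
        - (\<Sum>j<n. mum j * x j) - (\<Sum>j<n. mum j * (if j \<in> J then \<delta> else 0)))"
    using shift by (simp add: objf_def indic_add_def distrib_left sum.distrib)
  also have "\<dots> = ereal (F + \<delta> * of_int (muJ n p C mup mum J x))"
  proof -
    have "N \<subseteq> {..<p}" by (auto simp: N_def NU_def)
    then show ?thesis using J
      by (simp add: F_def muJ_def N_def sum_mult_indicator algebra_simps)
  qed
  finally have "objf n p C mup mum (indic_add x \<delta> J) = ereal (F + \<delta> * of_int (muJ n p C mup mum J x))" .
  moreover have "objf n p C mup mum x = ereal F"
    using R by (simp add: objf_def F_def)
  ultimately show ?thesis by blast
qed

lemma objf_indic_add_less_iff:
  assumes "\<forall>k<p. \<forall>j<n. C k j \<noteq> \<infinity>" "\<forall>k<p. \<exists>j<n. C k j \<noteq> -\<infinity>"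
    and "J \<subseteq> {..<n}" and \<delta>: "0 < \<delta>" "ereal \<delta> < eps n m p Ap Am C x"
  shows "objf n p C mup mum (indic_add x \<delta> J) < objf n p C mup mum x \<longleftrightarrow> muJ n p C mup mum J x < 0"
proof -
  obtain F where "objf n p C mup mum x = ereal F"
    "objf n p C mup mum (indic_add x \<delta> J) = ereal (F + \<delta> * of_int (muJ n p C mup mum J x))"
    using objf_indic_add[OF assms] by blast
  then show ?thesis using \<delta>(1) by (simp add: mult_less_0_iff)
qed

theorem theorem4p1:
  fixes n m p :: nat
    and Ap Am C :: "nat \<Rightarrow> nat \<Rightarrow> ereal"
    and mup mum :: "nat \<Rightarrow> nat"
    and x :: "nat \<Rightarrow> real"
    and J :: "nat set"
  assumes Ap_Rmax: "\<forall>i<m. \<forall>j<n. Ap i j \<noteq> \<infinity>"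
    and Am_Rmax: "\<forall>i<m. \<forall>j<n. Am i j \<noteq> \<infinity>"
    and C_Rmax: "\<forall>k<p. \<forall>j<n. C k j \<noteq> \<infinity>"
    and A_rows: "\<forall>i<m. \<exists>j<n. Amax Ap Am i j \<noteq> -\<infinity>"
    and C_rows: "\<forall>k<p. \<exists>j<n. C k j \<noteq> -\<infinity>"
    and mu_bal: "(\<Sum>k<p. mup k) = (\<Sum>j<n. mum j)"
    and conn: "graph_connected n m p (Amax Ap Am) C"
    and xS: "x \<in> feasS n m Ap Am"
    and J_sub: "J \<subseteq> {..<n}"
  shows "(\<forall>\<delta>::real. 0 < \<delta> \<and> ereal \<delta> < eps n m p Ap Am C x \<longrightarrow>
            indic_add x \<delta> J \<in> feasS n m Ap Am \<and>
            objf n p C mup mum (indic_add x \<delta> J) < objf n p C mup mum x)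
         \<longleftrightarrow>
         ((\<forall>j\<in>J. \<forall>i\<in>NW_in n m Ap Am j x. \<exists>j'\<in>NV_in n Ap Am i x. j' \<in> J) \<and>
          muJ n p C mup mum J x < 0)"
proof -
  \<comment> \<open>The balance of \<open>\<mu>\<close> and the connectivity of the graph are standing assumptions of
    the paper; this local characterisation does not use them.\<close>
  have "indic_add x \<delta> J \<in> feasS n m Ap Am \<and>
        objf n p C mup mum (indic_add x \<delta> J) < objf n p C mup mum x \<longleftrightarrow>
      (\<forall>j\<in>J. \<forall>i\<in>NW_in n m Ap Am j x. \<exists>j'\<in>NV_in n Ap Am i x. j' \<in> J) \<and>
        muJ n p C mup mum J x < 0"
    if "0 < \<delta>" "ereal \<delta> < eps n m p Ap Am C x" for \<delta>
    using feasS_indic_add_iff[OF Ap_Rmax Am_Rmax A_rows xS J_sub that]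
      objf_indic_add_less_iff[OF C_Rmax C_rows J_sub that] by simp
  moreover obtain \<delta> where "0 < ereal \<delta>" "ereal \<delta> < eps n m p Ap Am C x"
    using ereal_dense2[OF eps_pos] by blast
  ultimately show ?thesis by auto
qed

end
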